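(* Let $v_1\ge v_2>0$ with $v_2<2$. A strategy profile $(X,Y)$ is a Nash equilibrium of the discrete all-pay auction with valuations $v_1,v_2$ if and only if $Y=\delta_0$ and: if $v_1/2>1$ then $X=\delta_1$; if $v_1/2=1$ then $X=(1-\alpha)\delta_0+\alpha\delta_1$ for some $\alpha\in[0,1]$; if $v_1/2<1$ then $X=\delta_0$.
   Context: Discrete all-pay auction: two players, 1 and 2, value a prize at $v_1$ and $v_2$ respectively, where $v_1\ge v_2>0$. A (mixed) strategy is a probability distribution on $\mathbb{Z}_{\ge 0}$ with finite mean, identified with a $\mathbb{Z}_{\ge0}$-valued random variable; the two players' choices are independent. If player 1 uses $X$ and player 2 uses $Y$, the expected payoffs are $P^1(X,Y)=v_1\Pr(X>Y)+\frac{v_1}{2}\Pr(X=Y)-\mathbf{E}(X)$ and $P^2(Y,X)=v_2\Pr(Y>X)+\frac{v_2}{2}\Pr(X=Y)-\mathbf{E}(Y)$. A Nash equilibrium of the all-pay auction is a pair $(X,Y)$ with $P^1(X,Y)\ge P^1(X',Y)$ and $P^2(Y,X)\ge P^2(Y',X)$ for all strategies $X',Y'$. $\delta_j$ denotes the point mass at $j$; $(1-\alpha)\delta_0+\alpha\delta_1$ is the mixture. *)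

theory Defs
  imports "HOL-Probability.Probability"
begin

definition strategy :: "nat pmf \<Rightarrow> bool" where
  "strategy X \<longleftrightarrow> integrable (measure_pmf X) (\<lambda>n. real n)"

definition mean :: "nat pmf \<Rightarrow> real" where
  "mean X = measure_pmf.expectation X (\<lambda>n. real n)"

definition payoff :: "real \<Rightarrow> nat pmf \<Rightarrow> nat pmf \<Rightarrow> real" where
  "payoff v X Y =
     v * measure_pmf.prob (pair_pmf X Y) {(x, y). x > y}
     + v / 2 * measure_pmf.prob (pair_pmf X Y) {(x, y). x = y}
     - mean X"

definition nash_eq :: "real \<Rightarrow> real \<Rightarrow> nat pmf \<Rightarrow> nat pmf \<Rightarrow> bool" where
  "nash_eq v1 v2 X Y \<longleftrightarrow> strategy X \<and> strategy Y \<and>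
     (\<forall>X'. strategy X' \<longrightarrow> payoff v1 X' Y \<le> payoff v1 X Y) \<and>
     (\<forall>Y'. strategy Y' \<longrightarrow> payoff v2 Y' X \<le> payoff v2 Y X)"

text \<open>The mixture (1-\<alpha>) \<delta>_0 + \<alpha> \<delta>_1.\<close>
definition mix01 :: "real \<Rightarrow> nat pmf" where
  "mix01 \<alpha> = map_pmf (\<lambda>b. if b then 1 else 0) (bernoulli_pmf \<alpha>)"

end

theory Submission imports Defs begin

text \<open>
  A player's payoff is linear in his own mixed strategy: it is the expectation of the payoff
  of the pure bid x against the opponent's mixed strategy. Hence a best response is exactly a
  strategy supported on the pure best responses. For a player with valuation v < 2 the bid 0
  strictly dominates every positive bid, whatever the opponent does, so player 2 bids 0. Against
  the bid 0, the pure payoff of player 1 is v1/2 at 0 and v1 - x at x \<ge> 1, which is maximal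
  exactly at 1 if v1 > 2, at 0 and 1 if v1 = 2, and at 0 if v1 < 2.
\<close>

definition pure_payoff :: "real \<Rightarrow> nat pmf \<Rightarrow> nat \<Rightarrow> real" where
  "pure_payoff v Y x = v * measure_pmf.prob Y {y. y < x} + v / 2 * pmf Y x - real x"

definition best_response :: "real \<Rightarrow> nat pmf \<Rightarrow> nat pmf \<Rightarrow> bool" where
  "best_response v X Y \<longleftrightarrow> strategy X \<and> (\<forall>X'. strategy X' \<longrightarrow> payoff v X' Y \<le> payoff v X Y)"

lemma nash_eq_iff_best_responses:
  "nash_eq v1 v2 X Y \<longleftrightarrow> best_response v1 X Y \<and> best_response v2 Y X"
  by (auto simp: nash_eq_def best_response_def)

lemma strategy_if_finite_support: "finite (set_pmf X) \<Longrightarrow> strategy X"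
  unfolding strategy_def by (rule integrable_measure_pmf_finite)

lemma strategy_return_pmf: "strategy (return_pmf n)"
  by (simp add: strategy_if_finite_support)

lemma pmf_mix01:
  assumes "0 \<le> \<alpha>" "\<alpha> \<le> 1"
  shows "pmf (mix01 \<alpha>) n = (if n = 0 then 1 - \<alpha> else if n = 1 then \<alpha> else 0)"
proof -
  have "{b. b} = {True}" "{b. \<not> b} = {False}" by auto
  then show ?thesis using assms by (simp add: mix01_def pmf_map measure_pmf_single vimage_def)
qed

lemma set_pmf_subset_01_iff_mix01:
  "set_pmf X \<subseteq> {0, 1} \<longleftrightarrow> (\<exists>\<alpha>\<in>{0..1}. X = mix01 \<alpha>)"
proof
  assume supp: "set_pmf X \<subseteq> {0, 1}"
  have "measure_pmf.prob X {0, 1} = 1"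
    using supp by (subst measure_pmf.prob_eq_1) (auto simp: AE_measure_pmf_iff)
  then have total: "pmf X 0 + pmf X 1 = 1"
    by (simp add: measure_pmf.finite_measure_eq_sum_singleton measure_pmf_single)
  have "pmf X n = pmf (mix01 (pmf X 1)) n" for n
  proof -
    have "n \<notin> {0, 1} \<Longrightarrow> pmf X n = 0"
      using supp by (meson set_pmf_iff subsetD)
    then show ?thesis using total by (auto simp: pmf_mix01 pmf_le_1)
  qed
  then have "X = mix01 (pmf X 1)" by (rule pmf_eqI)
  moreover have "pmf X 1 \<in> {0..1}" by (simp add: pmf_le_1)
  ultimately show "\<exists>\<alpha>\<in>{0..1}. X = mix01 \<alpha>" by blast
next
  assume "\<exists>\<alpha>\<in>{0..1}. X = mix01 \<alpha>"
  then show "set_pmf X \<subseteq> {0, 1}" by (auto simp: mix01_def)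
qed

lemma measure_pair_pmf_eq_expectation:
  "measure_pmf.prob (pair_pmf X Y) A =
   measure_pmf.expectation X (\<lambda>a. measure_pmf.prob Y {b. (a, b) \<in> A})"
proof -
  have "ennreal (measure_pmf.prob (pair_pmf X Y) A) = (\<integral>\<^sup>+a. \<integral>\<^sup>+b. indicator A (a, b) \<partial>Y \<partial>X)"
    by (simp add: measure_pmf.emeasure_eq_measure[symmetric] nn_integral_pair_pmf'[symmetric])
  also have "\<dots> = (\<integral>\<^sup>+a. ennreal (measure_pmf.prob Y {b. (a, b) \<in> A}) \<partial>X)"
  proof (rule nn_integral_cong)
    fix a
    have "(\<integral>\<^sup>+b. indicator A (a, b) \<partial>Y) = (\<integral>\<^sup>+b. indicator {b. (a, b) \<in> A} b \<partial>Y)"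
      by (rule nn_integral_cong) (simp add: indicator_def)
    then show "(\<integral>\<^sup>+b. indicator A (a, b) \<partial>Y) = ennreal (measure_pmf.prob Y {b. (a, b) \<in> A})"
      by (simp add: measure_pmf.emeasure_eq_measure)
  qed
  also have "\<dots> = ennreal (measure_pmf.expectation X (\<lambda>a. measure_pmf.prob Y {b. (a, b) \<in> A}))"
    by (rule nn_integral_eq_integral)
       (auto intro!: measure_pmf.integrable_const_bound[where B=1])
  finally show ?thesis
    by (simp add: Bochner_Integration.integral_nonneg)
qed

lemma
  assumes "strategy X"
  shows integrable_pure_payoff: "integrable (measure_pmf X) (pure_payoff v Y)"
    and payoff_eq_expectation_pure_payoff: "payoff v X Y = measure_pmf.expectation X (pure_payoff v Y)"
proof -
  have win: "integrable (measure_pmf X) (\<lambda>x. v * measure_pmf.prob Y {y. y < x})"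
    by (intro integrable_mult_right measure_pmf.integrable_const_bound[where B=1]) auto
  have tie: "integrable (measure_pmf X) (\<lambda>x. v / 2 * pmf Y x)"
    by (intro integrable_mult_right measure_pmf.integrable_const_bound[where B=1])
       (auto simp: pmf_le_1)
  have bid: "integrable (measure_pmf X) (\<lambda>x. real x)"
    using assms by (simp add: strategy_def)
  show "integrable (measure_pmf X) (pure_payoff v Y)"
    unfolding pure_payoff_def using win tie bid by simp
  have "{b. (a, b) \<in> {(x, y). x = y}} = {a}" for a by auto
  then have "measure_pmf.prob (pair_pmf X Y) {(x, y). x = y} = measure_pmf.expectation X (pmf Y)"
    by (simp add: measure_pair_pmf_eq_expectation measure_pmf_single)
  then show "payoff v X Y = measure_pmf.expectation X (pure_payoff v Y)"
    unfolding payoff_def mean_def pure_payoff_def using win tie bid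
    by (simp add: measure_pair_pmf_eq_expectation Bochner_Integration.integral_add
        Bochner_Integration.integral_diff)
qed

lemma payoff_return_pmf: "payoff v (return_pmf x) Y = pure_payoff v Y x"
  by (simp add: payoff_eq_expectation_pure_payoff strategy_return_pmf)

lemma expectation_ge_upper_bound_imp_eq:
  fixes f :: "'a \<Rightarrow> real"
  assumes "integrable (measure_pmf X) f" "\<And>x. f x \<le> c" "c \<le> measure_pmf.expectation X f"
    and "x \<in> set_pmf X"
  shows "f x = c"
proof -
  have "measure_pmf.expectation X (\<lambda>x. c - f x) = c - measure_pmf.expectation X f"
    using assms(1) by (simp add: Bochner_Integration.integral_diff)
  moreover have "0 \<le> measure_pmf.expectation X (\<lambda>x. c - f x)"
    using assms(2) by (simp add: Bochner_Integration.integral_nonneg)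
  ultimately have "measure_pmf.expectation X (\<lambda>x. c - f x) = 0"
    using assms(3) by linarith
  then have "AE y in measure_pmf X. c - f y = 0"
    using assms(1,2) by (subst (asm) integral_nonneg_eq_0_iff_AE) auto
  then show ?thesis using assms(4) by (simp add: AE_measure_pmf_iff)
qed

lemma best_response_iff_support_in_argmax:
  assumes bound: "\<And>x. pure_payoff v Y x \<le> c" and attained: "pure_payoff v Y k = c"
  shows "best_response v X Y \<longleftrightarrow> strategy X \<and> set_pmf X \<subseteq> {x. pure_payoff v Y x = c}"
proof
  assume br: "best_response v X Y"
  then have X: "strategy X" by (simp add: best_response_def)
  have "c \<le> payoff v X Y"
    using br attained payoff_return_pmf[of v k Y] strategy_return_pmf[of k]
    by (auto simp: best_response_def)
  then show "strategy X \<and> set_pmf X \<subseteq> {x. pure_payoff v Y x = c}"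
    using X expectation_ge_upper_bound_imp_eq[OF integrable_pure_payoff[OF X] bound]
    by (auto simp: payoff_eq_expectation_pure_payoff)
next
  assume "strategy X \<and> set_pmf X \<subseteq> {x. pure_payoff v Y x = c}"
  then have X: "strategy X" and supp: "set_pmf X \<subseteq> {x. pure_payoff v Y x = c}" by auto
  have "payoff v X Y = c"
    unfolding payoff_eq_expectation_pure_payoff[OF X] using supp
    by (subst integral_cong_AE[where g = "\<lambda>_. c"]) (auto simp: AE_measure_pmf_iff)
  moreover have "payoff v X' Y \<le> c" if "strategy X'" for X'
    using bound by (simp add: payoff_eq_expectation_pure_payoff[OF that]
        measure_pmf.integral_le_const integrable_pure_payoff[OF that])
  ultimately show "best_response v X Y" using X by (simp add: best_response_def)
qed

lemma prob_less_plus_pmf_le_1: "measure_pmf.prob (Y :: nat pmf) {y. y < x} + pmf Y x \<le> 1"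
proof -
  have "measure_pmf.prob Y ({y. y < x} \<union> {x}) = measure_pmf.prob Y {y. y < x} + measure_pmf.prob Y {x}"
    by (rule measure_pmf.finite_measure_Union) auto
  then show ?thesis by (metis measure_pmf.prob_le_1 measure_pmf_single)
qed

lemma pure_payoff_zero_strictly_dominant:
  assumes "0 < v" "v < 2" "x \<noteq> 0"
  shows "pure_payoff v Y x < pure_payoff v Y 0"
proof (cases "x = 1")
  case True
  have "{y. y < x} = {0}" using True by auto
  then have "pmf Y 0 + pmf Y 1 \<le> 1"
    using prob_less_plus_pmf_le_1[of Y x] True by (simp add: measure_pmf_single)
  then have "v / 2 * (pmf Y 0 + pmf Y 1) \<le> v / 2"
    using assms by (simp add: mult_left_le)
  then have "v / 2 * (pmf Y 0 + pmf Y 1) < 1"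
    using assms by linarith
  then show ?thesis using True \<open>{y. y < x} = {0}\<close>
    by (simp add: pure_payoff_def measure_pmf_single algebra_simps)
next
  case False
  have "pure_payoff v Y x \<le> v * (measure_pmf.prob Y {y. y < x} + pmf Y x) - real x"
    using assms by (simp add: pure_payoff_def algebra_simps)
  also have "\<dots> \<le> v - real x"
    using prob_less_plus_pmf_le_1[of Y x] assms by (simp add: mult_left_le)
  also have "\<dots> < 0" using False assms by linarith
  also have "0 \<le> pure_payoff v Y 0" using assms by (simp add: pure_payoff_def)
  finally show ?thesis .
qed

lemma best_response_iff_return_pmf_0:
  assumes "0 < v" "v < 2"
  shows "best_response v Y X \<longleftrightarrow> Y = return_pmf 0"
proof -
  have bound: "pure_payoff v X x \<le> pure_payoff v X 0" for x
    using pure_payoff_zero_strictly_dominant[OF assms, of x X] by (cases "x = 0") auto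
  have argmax: "{x. pure_payoff v X x = pure_payoff v X 0} = {0}"
    using pure_payoff_zero_strictly_dominant[OF assms, of _ X] by auto (metis less_irrefl neq0_conv)
  show ?thesis
    unfolding best_response_iff_support_in_argmax[OF bound refl] argmax
    by (auto simp: strategy_return_pmf set_pmf_subset_singleton)
qed

lemma pure_payoff_return_0: "pure_payoff v (return_pmf 0) x = (if x = 0 then v / 2 else v - real x)"
  by (simp add: pure_payoff_def measure_return_pmf indicator_def)

lemma pure_payoff_return_0_le: "pure_payoff v (return_pmf 0) x \<le> max (v / 2) (v - 1)"
  by (auto simp: pure_payoff_return_0)

lemma argmax_pure_payoff_return_0:
  "{x. pure_payoff v (return_pmf 0) x = max (v / 2) (v - 1)} =
     (if v > 2 then {1} else if v = 2 then {0, 1} else {0})"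
  by (auto simp: pure_payoff_return_0 max_def)

lemma best_response_return_0_iff:
  "best_response v X (return_pmf 0) \<longleftrightarrow>
     (v / 2 > 1 \<longrightarrow> X = return_pmf 1) \<and>
     (v / 2 = 1 \<longrightarrow> (\<exists>\<alpha>\<in>{0..1}. X = mix01 \<alpha>)) \<and>
     (v / 2 < 1 \<longrightarrow> X = return_pmf 0)"
proof -
  define A where "A = {x. pure_payoff v (return_pmf 0) x = max (v / 2) (v - 1)}"
  obtain k where "pure_payoff v (return_pmf 0) k = max (v / 2) (v - 1)"
    by (metis pure_payoff_return_0 max_def of_nat_1 one_neq_zero)
  then have "best_response v X (return_pmf 0) \<longleftrightarrow> strategy X \<and> set_pmf X \<subseteq> A"
    unfolding A_def by (rule best_response_iff_support_in_argmax[OF pure_payoff_return_0_le])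
  also have "\<dots> \<longleftrightarrow> set_pmf X \<subseteq> A"
  proof -
    have "finite A" unfolding A_def argmax_pure_payoff_return_0 by simp
    then show ?thesis by (meson finite_subset strategy_if_finite_support)
  qed
  finally show ?thesis
    unfolding A_def argmax_pure_payoff_return_0 set_pmf_subset_01_iff_mix01[symmetric]
    by (simp add: set_pmf_subset_singleton)
qed

theorem theorem4:
  fixes v1 v2 :: real and X Y :: "nat pmf"
  assumes "v1 \<ge> v2" and "v2 > 0" and "v2 < 2"
  shows "nash_eq v1 v2 X Y \<longleftrightarrow>
           Y = return_pmf 0 \<and>
           (v1 / 2 > 1 \<longrightarrow> X = return_pmf 1) \<and>
           (v1 / 2 = 1 \<longrightarrow> (\<exists>\<alpha>\<in>{0..1}. X = mix01 \<alpha>)) \<and>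
           (v1 / 2 < 1 \<longrightarrow> X = return_pmf 0)"
proof -
  have "best_response v2 Y X \<longleftrightarrow> Y = return_pmf 0"
    by (rule best_response_iff_return_pmf_0[OF assms(2,3)])
  then have "nash_eq v1 v2 X Y \<longleftrightarrow> Y = return_pmf 0 \<and> best_response v1 X (return_pmf 0)"
    unfolding nash_eq_iff_best_responses by auto
  then show ?thesis by (simp only: best_response_return_0_iff)
qed

end
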